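(* Let $\lambda>0$ and let $f\in\mathcal B_\lambda$ be bounded and non-constant. Let $\omega$ be the positive measure on $[0,\infty)$ with $t^{-\lambda}f(t)=\int_0^\infty e^{-ts}\,d\omega(s)$ for $t>0$, and write $\mathcal L(\omega)(x)=\int_0^\infty e^{-xs}\,d\omega(s)$. (i) If $\lambda\le 1$, then for all $x,y>0$, $$y^{y}\frac{\Gamma(\lambda+y)}{\Gamma(y)}\int_0^\infty\frac{d\omega(s)}{(y+xs)^{\lambda+y}}<\mathcal L(\omega)(x).$$ (ii) If $\lambda>1$, then for all $x,y>0$, $$y^{\lambda+y}\int_0^\infty\frac{d\omega(s)}{(y+xs)^{\lambda+y}}<\mathcal L(\omega)(x).$$
   Context: For $\lambda>0$, $\mathcal B_\lambda$ is the class of non-negative functions $f$ on $(0,\infty)$ having derivatives of all orders such that $f'(x)x^{1-\lambda}$ is completely monotonic. For any $f\in\mathcal B_\lambda$ the function $t\mapsto t^{-\lambda}f(t)$ is completely monotonic, so by Bernstein's theorem it is the Laplace transform of a unique positive measure $\omega$ on $[0,\infty)$. *)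

theory Defs
  imports "HOL-Analysis.Analysis"
begin

definition smooth_pos :: "(real \<Rightarrow> real) \<Rightarrow> bool" where
  "smooth_pos g \<longleftrightarrow> (\<forall>n. \<forall>x>0. (deriv ^^ n) g differentiable (at x))"

definition completely_monotonic :: "(real \<Rightarrow> real) \<Rightarrow> bool" where
  "completely_monotonic g \<longleftrightarrow> smooth_pos g \<and>
     (\<forall>n. \<forall>x>0. (-1) ^ n * (deriv ^^ n) g x \<ge> 0)"

definition class_B :: "real \<Rightarrow> (real \<Rightarrow> real) \<Rightarrow> bool" where
  "class_B lam f \<longleftrightarrow> (\<forall>x>0. f x \<ge> 0) \<and> smooth_pos f \<and>
     completely_monotonic (\<lambda>x. deriv f x * x powr (1 - lam))"

end

theory Submission
  imports Defs
begin

text \<open>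
  Euler's integral \<Gamma>(a) (b + c s)^-a = \<integral>_0^\<infinity> u^(a-1) e^-(b+cs)u du and Tonelli turn the
  left-hand sides into a Gamma average of the Laplace transform t^-\<lambda> f(t) of \<omega>:

    \<Gamma>(\<lambda>+y) \<integral> d\<omega>(s) / (y+xs)^(\<lambda>+y) = x^-\<lambda> \<integral>_0^\<infinity> u^(y-1) e^(-yu) f(xu) du.

  For f in B_\<lambda> the function g(t) = t^(1-\<lambda>) f'(t) is nonnegative and nonincreasing. With
  K = x f'(x) / \<lambda>, the function u \<mapsto> f(xu) - K u^\<lambda> has derivative x^\<lambda> u^(\<lambda>-1) (g(xu) - g(x)),
  so it peaks at u = 1:  f(xu) \<le> f(x) + K (u^\<lambda> - 1), where 0 \<le> K \<le> f(x) (let u \<rightarrow> 0), and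
  the inequality is strict on an interval because f is bounded and non-constant. The weight
  u^(y-1) e^(-yu) has mass and first moment \<Gamma>(y)/y^y and moment of order \<lambda> equal to
  \<Gamma>(y+\<lambda>)/y^(y+\<lambda>), so the average is strictly below f(x) times the larger of these two
  numbers. By Jensen's inequality (Wendel's inequality) the first is the larger one when
  \<lambda> \<le> 1 and the second one when \<lambda> \<ge> 1, which gives the constants in (i) and (ii).
\<close>

lemma has_bochner_integral_mono:
  fixes f g :: "'a \<Rightarrow> real"
  assumes f: "has_bochner_integral M f a" and g: "has_bochner_integral M g b"
    and le: "\<And>x. x \<in> space M \<Longrightarrow> f x \<le> g x"
  shows "a \<le> b"
  using integral_mono[OF integrable.intros[OF f] integrable.intros[OF g] le]
  by (simp add: has_bochner_integral_integral_eq[OF f] has_bochner_integral_integral_eq[OF g])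

lemma has_bochner_integral_less:
  fixes f g :: "'a \<Rightarrow> real"
  assumes f: "has_bochner_integral M f a" and g: "has_bochner_integral M g b"
    and le: "\<And>x. x \<in> space M \<Longrightarrow> f x \<le> g x"
    and A: "A \<in> sets M" "emeasure M A \<noteq> 0" and less: "\<And>x. x \<in> A \<Longrightarrow> f x < g x"
  shows "a < b"
proof -
  have diff: "has_bochner_integral M (\<lambda>x. g x - f x) (b - a)"
    by (rule has_bochner_integral_diff[OF g f])
  have "b - a \<noteq> 0"
  proof
    assume "b - a = 0"
    then have "AE x in M. g x - f x = 0"
      using integral_nonneg_eq_0_iff_AE[OF integrable.intros[OF diff]] le
      by (simp add: has_bochner_integral_integral_eq[OF diff])
    then have "AE x in M. x \<notin> A"
      by eventually_elim (use less in force)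
    then show False
      using A AE_iff_measurable[OF A(1), of "\<lambda>x. x \<notin> A"] sets.sets_into_space[OF A(1)] by auto
  qed
  then show ?thesis
    using has_bochner_integral_mono[OF f g le] by simp
qed

section \<open>Integrals against a Gamma weight\<close>

lemma nn_integral_powr_exp:
  fixes a b :: real
  assumes a: "a > 0" and b: "b > 0"
  shows "(\<integral>\<^sup>+u. ennreal (indicator {0<..} u * u powr (a - 1) * exp (- (b * u))) \<partial>lborel)
         = ennreal (Gamma a / b powr a)"
proof -
  let ?I = "\<integral>\<^sup>+u. ennreal (indicator {0<..} u * u powr (a - 1) * exp (- (b * u))) \<partial>lborel"
  have scale: "ennreal b * ennreal (indicator {0..} (b * u) * (b * u) powr (a - 1) / exp (b * u))
      = ennreal (b powr a) * ennreal (indicator {0<..} u * u powr (a - 1) * exp (- (b * u)))" for u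
  proof (cases "u > 0")
    case True
    then have "b * (b * u) powr (a - 1) / exp (b * u) = b powr a * (u powr (a - 1) * exp (- (b * u)))"
      using b by (simp add: powr_mult powr_mult_base exp_minus field_simps)
    then show ?thesis
      using b True by (simp add: zero_le_mult_iff flip: ennreal_mult')
  qed (use b in \<open>auto simp: indicator_def zero_le_mult_iff\<close>)
  have "ennreal (Gamma a) = (\<integral>\<^sup>+t. ennreal (indicator {0..} t * t powr (a - 1) / exp t) \<partial>lborel)"
    by (rule Gamma_conv_nn_integral_real[OF a])
  also have "\<dots> = ennreal b * (\<integral>\<^sup>+u. ennreal (indicator {0..} (b * u) * (b * u) powr (a - 1) / exp (b * u)) \<partial>lborel)"
    using b by (subst nn_integral_real_affine[where c=b and t=0]) auto
  also have "\<dots> = (\<integral>\<^sup>+u. ennreal (b powr a) * ennreal (indicator {0<..} u * u powr (a - 1) * exp (- (b * u))) \<partial>lborel)"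
    unfolding scale[symmetric] by (rule nn_integral_cmult[symmetric]) measurable
  also have "\<dots> = ennreal (b powr a) * ?I"
    by (rule nn_integral_cmult) measurable
  finally have Gamma_eq: "ennreal (Gamma a) = ennreal (b powr a) * ?I" .
  have "?I = ennreal (1 / b powr a) * (ennreal (b powr a) * ?I)"
    using b by (simp add: mult.assoc[symmetric] flip: ennreal_mult')
  also have "\<dots> = ennreal (Gamma a / b powr a)"
    using b by (simp add: Gamma_eq[symmetric] flip: ennreal_mult')
  finally show ?thesis .
qed

definition gamma_weight :: "real \<Rightarrow> real \<Rightarrow> real" where
  "gamma_weight y u = indicator {0<..} u * u powr (y - 1) * exp (- (y * u))"

lemma gamma_weight_nonneg: "0 \<le> gamma_weight y u"
  by (simp add: gamma_weight_def)

lemma gamma_weight_pos: "0 < u \<Longrightarrow> 0 < gamma_weight y u"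
  by (simp add: gamma_weight_def)

lemma gamma_weight_nonpos: "u \<le> 0 \<Longrightarrow> gamma_weight y u = 0"
  by (simp add: gamma_weight_def)

lemma borel_measurable_gamma_weight[measurable]: "gamma_weight y \<in> borel_measurable borel"
  unfolding gamma_weight_def[abs_def] by measurable

lemma has_bochner_integral_gamma_weight_powr:
  assumes y: "y > 0" and yr: "y + r > 0"
  shows "has_bochner_integral lborel (\<lambda>u. gamma_weight y u * u powr r) (Gamma (y + r) / y powr (y + r))"
proof (rule has_bochner_integral_nn_integral)
  have "gamma_weight y u * u powr r = indicator {0<..} u * u powr (y + r - 1) * exp (- (y * u))" for u
    by (cases "u > 0") (simp_all add: gamma_weight_def powr_add[symmetric] algebra_simps)
  then show "(\<integral>\<^sup>+u. ennreal (gamma_weight y u * u powr r) \<partial>lborel) = ennreal (Gamma (y + r) / y powr (y + r))"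
    using nn_integral_powr_exp[OF yr y] by simp
  show "0 \<le> Gamma (y + r) / y powr (y + r)"
    using Gamma_real_pos[OF yr] by simp
qed (simp_all add: gamma_weight_nonneg)

lemma has_bochner_integral_gamma_weight:
  assumes "y > 0"
  shows "has_bochner_integral lborel (gamma_weight y) (Gamma y / y powr y)"
proof -
  have "(\<lambda>u. gamma_weight y u * u powr 0) = gamma_weight y"
    by (rule ext) (simp add: gamma_weight_def)
  then show ?thesis
    using has_bochner_integral_gamma_weight_powr[of y 0] assms by simp
qed

lemma has_bochner_integral_gamma_weight_mean:
  assumes "y > 0"
  shows "has_bochner_integral lborel (\<lambda>u. gamma_weight y u * u) (Gamma y / y powr y)"
proof -
  have "(\<lambda>u. gamma_weight y u * u powr 1) = (\<lambda>u. gamma_weight y u * u)"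
    by (rule ext) (simp add: gamma_weight_def indicator_def)
  moreover have "Gamma (y + 1) = y * Gamma y"
    using assms by (intro Gamma_plus1) (auto elim!: nonpos_Ints_cases)
  ultimately show ?thesis
    using has_bochner_integral_gamma_weight_powr[of y 1] assms by (simp add: powr_add)
qed

lemma has_bochner_integral_gamma_weight_affine:
  assumes "y > 0"
  shows "has_bochner_integral lborel (\<lambda>u. gamma_weight y u * (a * u + b)) ((a + b) * (Gamma y / y powr y))"
proof -
  have "has_bochner_integral lborel (\<lambda>u. a * (gamma_weight y u * u) + b * gamma_weight y u)
      ((a + b) * (Gamma y / y powr y))"
    unfolding distrib_right
    using has_bochner_integral_gamma_weight_mean[OF assms] has_bochner_integral_gamma_weight[OF assms]
    by (intro has_bochner_integral_add has_bochner_integral_mult_right)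
  moreover have "(\<lambda>u. a * (gamma_weight y u * u) + b * gamma_weight y u) = (\<lambda>u. gamma_weight y u * (a * u + b))"
    by (rule ext) (simp add: algebra_simps)
  ultimately show ?thesis
    by simp
qed

lemma borel_measurable_gamma_weight_comp:
  fixes h :: "real \<Rightarrow> real"
  assumes cont: "continuous_on {0<..} h" and x: "0 < x"
  shows "(\<lambda>u. gamma_weight y u * h (x * u)) \<in> borel_measurable borel"
proof -
  have "continuous_on {0<..} (\<lambda>u. u powr (y - 1) * exp (- (y * u)) * h (x * u))"
    by (intro continuous_intros continuous_on_compose2[OF cont]) (auto simp: x)
  then have "(\<lambda>u. indicator {0<..} u *\<^sub>R (u powr (y - 1) * exp (- (y * u)) * h (x * u))) \<in> borel_measurable borel"
    by (intro borel_measurable_continuous_on_indicator) auto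
  then show ?thesis
    by (simp add: gamma_weight_def mult.assoc)
qed

lemma integrable_gamma_weight_comp:
  fixes h :: "real \<Rightarrow> real"
  assumes cont: "continuous_on {0<..} h" and bounded: "\<And>t. 0 < t \<Longrightarrow> \<bar>h t\<bar> \<le> M"
    and x: "0 < x" and y: "0 < y"
  shows "integrable lborel (\<lambda>u. gamma_weight y u * h (x * u))"
proof (rule Bochner_Integration.integrable_bound)
  show "integrable lborel (\<lambda>u. M * gamma_weight y u)"
    using has_bochner_integral_gamma_weight[OF y] by (intro integrable_mult_right integrable.intros)
  show "(\<lambda>u. gamma_weight y u * h (x * u)) \<in> borel_measurable lborel"
    using borel_measurable_gamma_weight_comp[OF cont x] by simp
  show "AE u in lborel. norm (gamma_weight y u * h (x * u)) \<le> norm (M * gamma_weight y u)"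
  proof (rule AE_I2)
    fix u :: real
    show "norm (gamma_weight y u * h (x * u)) \<le> norm (M * gamma_weight y u)"
    proof (cases "0 < u")
      case True
      then have "gamma_weight y u * \<bar>h (x * u)\<bar> \<le> gamma_weight y u * \<bar>M\<bar>"
        using bounded[of "x * u"] x by (intro mult_left_mono gamma_weight_nonneg) simp
      then show ?thesis
        by (simp add: abs_mult gamma_weight_nonneg mult.commute)
    qed (simp add: gamma_weight_nonpos)
  qed
qed

lemma Gamma_add_le_powr_Gamma:
  fixes y lam :: real
  assumes y: "y > 0" and lam: "0 \<le> lam" "lam \<le> 1"
  shows "Gamma (y + lam) \<le> y powr lam * Gamma y"
proof -
  have "Gamma (y + lam) / y powr (y + lam) \<le> (lam + (1 - lam)) * (Gamma y / y powr y)"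
  proof (rule has_bochner_integral_mono)
    show "has_bochner_integral lborel (\<lambda>u. gamma_weight y u * u powr lam) (Gamma (y + lam) / y powr (y + lam))"
      using has_bochner_integral_gamma_weight_powr[of y lam] y lam by simp
    show "has_bochner_integral lborel (\<lambda>u. gamma_weight y u * (lam * u + (1 - lam))) ((lam + (1 - lam)) * (Gamma y / y powr y))"
      by (rule has_bochner_integral_gamma_weight_affine[OF y])
    show "gamma_weight y u * u powr lam \<le> gamma_weight y u * (lam * u + (1 - lam))" for u
    proof (cases "u > 0")
      case True
      then have "u powr lam \<le> lam * u + (1 - lam)"
        using Youngs_inequality_0[of lam "1 - lam" u 1] lam by simp
      then show ?thesis
        by (rule mult_left_mono) (rule gamma_weight_nonneg)
    qed (simp add: gamma_weight_nonpos)
  qed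
  then show ?thesis
    using y by (simp add: powr_add field_simps)
qed

lemma powr_Gamma_le_Gamma_add:
  fixes y lam :: real
  assumes y: "y > 0" and lam: "1 \<le> lam"
  shows "y powr lam * Gamma y \<le> Gamma (y + lam)"
proof -
  have "(lam + (1 - lam)) * (Gamma y / y powr y) \<le> Gamma (y + lam) / y powr (y + lam)"
  proof (rule has_bochner_integral_mono)
    show "has_bochner_integral lborel (\<lambda>u. gamma_weight y u * u powr lam) (Gamma (y + lam) / y powr (y + lam))"
      using has_bochner_integral_gamma_weight_powr[of y lam] y lam by simp
    show "has_bochner_integral lborel (\<lambda>u. gamma_weight y u * (lam * u + (1 - lam))) ((lam + (1 - lam)) * (Gamma y / y powr y))"
      by (rule has_bochner_integral_gamma_weight_affine[OF y])
    show "gamma_weight y u * (lam * u + (1 - lam)) \<le> gamma_weight y u * u powr lam" for u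
    proof (cases "u > 0")
      case True
      then have "u \<le> u powr lam / lam + (1 - 1 / lam)"
        using Youngs_inequality_0[of "1 / lam" "1 - 1 / lam" "u powr lam" 1] lam by (simp add: powr_powr)
      then have "lam * u \<le> lam * (u powr lam / lam + (1 - 1 / lam))"
        using lam by (intro mult_left_mono) auto
      also have "\<dots> = u powr lam + (lam - 1)"
        using lam by (simp add: field_simps)
      finally have "lam * u + (1 - lam) \<le> u powr lam"
        by simp
      then show ?thesis
        by (rule mult_left_mono) (rule gamma_weight_nonneg)
    qed (simp add: gamma_weight_nonpos)
  qed
  then show ?thesis
    using y by (simp add: powr_add field_simps)
qed

section \<open>Laplace transforms of measures on the half-line\<close>

lemma sigma_finite_if_laplace_finite:
  fixes \<omega> :: "real measure"
  assumes sets[measurable_cong]: "sets \<omega> = sets borel"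
    and finite: "(\<integral>\<^sup>+s. ennreal (exp (- t * s)) \<partial>\<omega>) < \<infinity>"
  shows "sigma_finite_measure \<omega>"
proof
  have space: "space \<omega> = UNIV"
    using sets_eq_imp_space_eq[OF sets] by simp
  have bounded: "emeasure \<omega> {- real n..real n} \<noteq> \<infinity>" for n :: nat
  proof -
    have "emeasure \<omega> {- real n..real n} = (\<integral>\<^sup>+s. indicator {- real n..real n} s \<partial>\<omega>)"
      using sets by simp
    also have "\<dots> \<le> (\<integral>\<^sup>+s. ennreal (exp (\<bar>t\<bar> * real n)) * ennreal (exp (- t * s)) \<partial>\<omega>)"
    proof (rule nn_integral_mono)
      fix s :: real
      have "\<bar>t * s\<bar> \<le> \<bar>t\<bar> * real n" if "\<bar>s\<bar> \<le> real n"
        using that by (simp add: abs_mult mult_left_mono)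
      then have "s \<in> {- real n..real n} \<Longrightarrow> 1 \<le> exp (\<bar>t\<bar> * real n) * exp (- t * s)"
        by (simp add: abs_le_iff flip: exp_add)
      then show "indicator {- real n..real n} s \<le> ennreal (exp (\<bar>t\<bar> * real n)) * ennreal (exp (- t * s))"
        by (auto simp: indicator_def simp flip: ennreal_mult)
    qed
    also have "\<dots> = ennreal (exp (\<bar>t\<bar> * real n)) * (\<integral>\<^sup>+s. ennreal (exp (- t * s)) \<partial>\<omega>)"
      by (rule nn_integral_cmult) measurable
    also have "\<dots> < \<infinity>"
      using finite by (simp add: ennreal_mult_less_top)
    finally show ?thesis
      by simp
  qed
  show "\<exists>A. countable A \<and> A \<subseteq> sets \<omega> \<and> \<Union> A = space \<omega> \<and> (\<forall>a\<in>A. emeasure \<omega> a \<noteq> \<infinity>)"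
  proof (intro exI[of _ "range (\<lambda>n::nat. {- real n..real n})"] conjI)
    have "\<exists>n::nat. s \<in> {- real n..real n}" for s :: real
      using real_arch_simple[of "\<bar>s\<bar>"] by (force simp: abs_le_iff)
    then show "\<Union> (range (\<lambda>n::nat. {- real n..real n})) = space \<omega>"
      using space by auto
  qed (use sets bounded in auto)
qed

lemma nn_integral_inverse_powr_eq_laplace:
  fixes \<omega> :: "real measure" and a b c :: real
  assumes sets[measurable_cong]: "sets \<omega> = sets borel" and nonneg: "AE s in \<omega>. 0 \<le> s"
    and sigma_finite: "sigma_finite_measure \<omega>"
    and a: "a > 0" and b: "b > 0" and c: "c > 0"
  shows "ennreal (Gamma a) * (\<integral>\<^sup>+s. ennreal (1 / (b + c * s) powr a) \<partial>\<omega>)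
       = (\<integral>\<^sup>+u. ennreal (indicator {0<..} u * u powr (a - 1) * exp (- (b * u)))
              * (\<integral>\<^sup>+s. ennreal (exp (- (c * u) * s)) \<partial>\<omega>) \<partial>lborel)"
proof -
  define F where "F s u = ennreal (indicator {0<..} u * u powr (a - 1) * exp (- ((b + c * s) * u)))" for s u
  interpret pair_sigma_finite \<omega> lborel
    by (simp add: pair_sigma_finite_def sigma_finite lborel.sigma_finite_measure_axioms)
  have "ennreal (Gamma a) * (\<integral>\<^sup>+s. ennreal (1 / (b + c * s) powr a) \<partial>\<omega>)
      = (\<integral>\<^sup>+s. ennreal (Gamma a) * ennreal (1 / (b + c * s) powr a) \<partial>\<omega>)"
    by (rule nn_integral_cmult[symmetric]) measurable
  also have "\<dots> = (\<integral>\<^sup>+s. (\<integral>\<^sup>+u. F s u \<partial>lborel) \<partial>\<omega>)"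
  proof (rule nn_integral_cong_AE)
    show "AE s in \<omega>. ennreal (Gamma a) * ennreal (1 / (b + c * s) powr a) = (\<integral>\<^sup>+u. F s u \<partial>lborel)"
      using nonneg
    proof eventually_elim
      case (elim s)
      then have "b + c * s > 0"
        using b c by (simp add: add_pos_nonneg)
      then show ?case
        using nn_integral_powr_exp[OF a, of "b + c * s"] Gamma_real_pos[OF a]
        by (simp add: F_def flip: ennreal_mult)
    qed
  qed
  also have "\<dots> = (\<integral>\<^sup>+u. (\<integral>\<^sup>+s. F s u \<partial>\<omega>) \<partial>lborel)"
    unfolding F_def by (rule Fubini'[symmetric]) measurable
  also have "\<dots> = (\<integral>\<^sup>+u. ennreal (indicator {0<..} u * u powr (a - 1) * exp (- (b * u)))
              * (\<integral>\<^sup>+s. ennreal (exp (- (c * u) * s)) \<partial>\<omega>) \<partial>lborel)"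
  proof (rule nn_integral_cong)
    fix u :: real
    have "F s u = ennreal (indicator {0<..} u * u powr (a - 1) * exp (- (b * u))) * ennreal (exp (- (c * u) * s))" for s
      by (simp add: F_def mult_exp_exp algebra_simps flip: ennreal_mult)
    then show "(\<integral>\<^sup>+s. F s u \<partial>\<omega>) = ennreal (indicator {0<..} u * u powr (a - 1) * exp (- (b * u)))
              * (\<integral>\<^sup>+s. ennreal (exp (- (c * u) * s)) \<partial>\<omega>)"
      by (simp add: nn_integral_cmult)
  qed
  finally show ?thesis .
qed

section \<open>Functions of class B\<close>

lemma smooth_pos_has_real_derivative:
  assumes "smooth_pos g" and "0 < t"
  shows "(g has_real_derivative deriv g t) (at t)"
  using assms unfolding smooth_pos_def by (metis DERIV_deriv_iff_real_differentiable funpow_0)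

lemma completely_monotonic_nonneg:
  assumes "completely_monotonic g" and "0 < t"
  shows "0 \<le> g t"
  using assms unfolding completely_monotonic_def by (metis funpow_0 power_0 mult_1)

lemma completely_monotonic_antimono:
  assumes cm: "completely_monotonic g"
  shows "antimono_on {0<..} g"
proof (rule monotone_onI)
  fix s t :: real
  assume "s \<in> {0<..}" and "s \<le> t"
  show "g t \<le> g s"
  proof (rule DERIV_nonpos_imp_nonincreasing[OF \<open>s \<le> t\<close>])
    fix z
    assume "s \<le> z"
    with \<open>s \<in> {0<..}\<close> have "0 < z"
      by simp
    moreover have "(-1) ^ 1 * (deriv ^^ 1) g z \<ge> 0"
      using cm \<open>0 < z\<close> unfolding completely_monotonic_def by blast
    ultimately show "\<exists>y. (g has_real_derivative y) (at z) \<and> y \<le> 0"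
      using cm smooth_pos_has_real_derivative unfolding completely_monotonic_def by fastforce
  qed
qed

lemma unimodal_if_deriv_sign:
  fixes \<phi> \<phi>' :: "real \<Rightarrow> real"
  assumes deriv: "\<And>t. 0 < t \<Longrightarrow> (\<phi> has_real_derivative \<phi>' t) (at t)"
    and up: "\<And>t. 0 < t \<Longrightarrow> t \<le> c \<Longrightarrow> 0 \<le> \<phi>' t"
    and down: "\<And>t. c \<le> t \<Longrightarrow> \<phi>' t \<le> 0"
    and c: "0 < c"
  shows "mono_on {0<..c} \<phi>" and "antimono_on {c..} \<phi>"
proof (rule mono_onI)
  fix s t
  assume "s \<in> {0<..c}" "t \<in> {0<..c}" "s \<le> t"
  then show "\<phi> s \<le> \<phi> t"
  proof (intro DERIV_nonneg_imp_nondecreasing[OF \<open>s \<le> t\<close>])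
    fix z
    assume "s \<le> z" "z \<le> t"
    with \<open>s \<in> {0<..c}\<close> \<open>t \<in> {0<..c}\<close> have "0 < z" "z \<le> c"
      by auto
    then show "\<exists>y. (\<phi> has_real_derivative y) (at z) \<and> 0 \<le> y"
      using deriv up by blast
  qed
next
  show "antimono_on {c..} \<phi>"
  proof (rule monotone_onI)
    fix s t
    assume "s \<in> {c..}" "s \<le> t"
    then show "\<phi> t \<le> \<phi> s"
    proof (intro DERIV_nonpos_imp_nonincreasing[OF \<open>s \<le> t\<close>])
      fix z
      assume "s \<le> z"
      with \<open>s \<in> {c..}\<close> c have "0 < z" "c \<le> z"
        by auto
      then show "\<exists>y. (\<phi> has_real_derivative y) (at z) \<and> y \<le> 0"
        using deriv down by blast
    qed
  qed
qed

lemma unimodal_le_peak: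
  fixes \<phi> :: "real \<Rightarrow> real"
  assumes mono: "mono_on {0<..c} \<phi>" and antimono: "antimono_on {c..} \<phi>"
    and "0 < c" "0 < t"
  shows "\<phi> t \<le> \<phi> c"
proof (cases "t \<le> c")
  case True
  then show ?thesis
    using monotone_onD[OF mono, of t c] assms by simp
next
  case False
  then show ?thesis
    using monotone_onD[OF antimono, of c t] by simp
qed

lemma unimodal_less_peak_interval:
  fixes \<phi> :: "real \<Rightarrow> real"
  assumes mono: "mono_on {0<..c} \<phi>" and antimono: "antimono_on {c..} \<phi>"
    and t: "0 < t" "\<phi> t < \<phi> c"
  obtains a b where "0 < a" "a < b" "\<And>s. s \<in> {a..b} \<Longrightarrow> \<phi> s < \<phi> c"
proof (cases "t \<le> c")
  case True
  have "\<phi> s < \<phi> c" if "s \<in> {t / 2..t}" for s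
    using monotone_onD[OF mono, of s t] that t True by force
  then show ?thesis
    using that[of "t / 2" t] t by simp
next
  case False
  have "\<phi> s < \<phi> c" if "s \<in> {t..t + 1}" for s
    using monotone_onD[OF antimono, of t s] that t False by force
  then show ?thesis
    using that[of t "t + 1"] t by simp
qed

lemma class_B_nonneg: "class_B lam f \<Longrightarrow> 0 < t \<Longrightarrow> 0 \<le> f t"
  by (simp add: class_B_def)

lemma class_B_continuous_on: "class_B lam f \<Longrightarrow> continuous_on {0<..} f"
  unfolding class_B_def
  by (intro continuous_at_imp_continuous_on ballI DERIV_isCont) (auto intro: smooth_pos_has_real_derivative)

lemma class_B_deriv_nonneg:
  assumes "class_B lam f" and "0 < t"
  shows "0 \<le> deriv f t"
proof -
  have "0 \<le> deriv f t * t powr (1 - lam)"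
    using assms completely_monotonic_nonneg unfolding class_B_def by blast
  with \<open>0 < t\<close> show ?thesis
    by (simp add: zero_le_mult_iff)
qed

lemma class_B_unimodal:
  fixes lam x :: real
  assumes fB: "class_B lam f" and lam: "0 < lam" and x: "0 < x"
  defines "\<phi> \<equiv> \<lambda>u. f (x * u) - x * deriv f x / lam * u powr lam"
  shows "mono_on {0<..1} \<phi>" and "antimono_on {1..} \<phi>"
proof -
  define g where "g t = deriv f t * t powr (1 - lam)" for t
  have f_smooth: "smooth_pos f" and g_antimono: "antimono_on {0<..} g"
    using fB completely_monotonic_antimono unfolding class_B_def g_def[abs_def] by auto
  have deriv_f: "deriv f t = g t * t powr (lam - 1)" if "0 < t" for t
    using that by (simp add: g_def mult.assoc flip: powr_add)
  have \<phi>_deriv: "(\<phi> has_real_derivative x * (x * u) powr (lam - 1) * (g (x * u) - g x)) (at u)"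
    if u: "0 < u" for u
  proof -
    have "((\<lambda>u. f (x * u)) has_real_derivative deriv f (x * u) * x) (at u)"
      using x u by (intro DERIV_chain2[OF smooth_pos_has_real_derivative[OF f_smooth]] DERIV_cmult_Id) simp
    then have "(\<phi> has_real_derivative deriv f (x * u) * x - x * deriv f x / lam * (lam * u powr (lam - 1))) (at u)"
      unfolding \<phi>_def by (intro DERIV_diff DERIV_cmult has_real_derivative_powr u)
    then show ?thesis
    proof (rule DERIV_cong)
      show "deriv f (x * u) * x - x * deriv f x / lam * (lam * u powr (lam - 1))
          = x * (x * u) powr (lam - 1) * (g (x * u) - g x)"
        using x u lam by (simp add: deriv_f powr_mult field_simps)
    qed
  qed
  have up: "0 \<le> x * (x * u) powr (lam - 1) * (g (x * u) - g x)" if "0 < u" "u \<le> 1" for u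
    using monotone_onD[OF g_antimono, of "x * u" x] x that by (simp add: mult_left_le)
  have down: "x * (x * u) powr (lam - 1) * (g (x * u) - g x) \<le> 0" if "1 \<le> u" for u
    using monotone_onD[OF g_antimono, of x "x * u"] x that
    by (simp add: mult_nonneg_nonpos mult_le_cancel_left1)
  show "mono_on {0<..1} \<phi>" "antimono_on {1..} \<phi>"
    by (rule unimodal_if_deriv_sign[OF \<phi>_deriv up down]; simp)+
qed

lemma class_B_majorant:
  fixes lam x u :: real
  assumes fB: "class_B lam f" and lam: "0 < lam" and x: "0 < x" and u: "0 < u"
  shows "f (x * u) \<le> f x + x * deriv f x / lam * (u powr lam - 1)"
  using unimodal_le_peak[OF class_B_unimodal[OF fB lam x] zero_less_one u] by (simp add: right_diff_distrib)

lemma class_B_mult_deriv_le: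
  fixes lam x :: real
  assumes fB: "class_B lam f" and lam: "0 < lam" and x: "0 < x"
  shows "x * deriv f x / lam \<le> f x"
proof -
  let ?K = "x * deriv f x / lam"
  have powr_lim: "((\<lambda>u. u powr lam) \<longlongrightarrow> 0) (at_right 0)"
    by (rule tendsto_zero_powrI[where f="\<lambda>u. u" and g="\<lambda>_. lam"])
      (auto simp: lam intro: tendsto_ident_at eventually_mono[OF eventually_at_right_less])
  have "0 \<le> f x + ?K * (0 - 1)"
  proof (rule tendsto_lowerbound)
    show "((\<lambda>u. f x + ?K * (u powr lam - 1)) \<longlongrightarrow> f x + ?K * (0 - 1)) (at_right 0)"
      by (intro tendsto_intros powr_lim)
    show "\<not> trivial_limit (at_right (0::real))"
      by (rule trivial_limit_at_right_real)
    show "\<forall>\<^sub>F u in at_right 0. 0 \<le> f x + ?K * (u powr lam - 1)"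
      using eventually_at_right_less
    proof (rule eventually_mono)
      fix u :: real
      assume "0 < u"
      then show "0 \<le> f x + ?K * (u powr lam - 1)"
        using class_B_majorant[OF fB lam x] class_B_nonneg[OF fB, of "x * u"] x by force
    qed
  qed
  then show ?thesis
    by simp
qed

lemma ex_class_B_majorant_strict:
  fixes lam x M :: real
  assumes fB: "class_B lam f" and lam: "0 < lam" and x: "0 < x"
    and bounded: "\<And>t. 0 < t \<Longrightarrow> \<bar>f t\<bar> \<le> M" and nonconst: "\<not> (\<exists>c. \<forall>t>0. f t = c)"
  shows "\<exists>u>0. f (x * u) < f x + x * deriv f x / lam * (u powr lam - 1)"
proof (rule ccontr)
  define K where "K = x * deriv f x / lam"
  assume "\<not> (\<exists>u>0. f (x * u) < f x + x * deriv f x / lam * (u powr lam - 1))"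
  then have exact: "f (x * u) = f x + K * (u powr lam - 1)" if "0 < u" for u
    using class_B_majorant[OF fB lam x that] that unfolding K_def by force
  show False
  proof (cases "K = 0")
    case True
    then have "f t = f x" if "0 < t" for t
      using exact[of "t / x"] x that by simp
    with nonconst show False
      by blast
  next
    case False
    then have K: "0 < K"
      using class_B_deriv_nonneg[OF fB x] x lam by (simp add: K_def)
    have "f x \<le> M"
      using bounded[OF x] by simp
    then have "0 \<le> (M - f x) / K"
      using K by (intro divide_nonneg_pos) auto
    then have base: "0 < (M - f x) / K + 2"
      by linarith
    define u where "u = ((M - f x) / K + 2) powr (1 / lam)"
    have u: "0 < u" and "u powr lam = (M - f x) / K + 2"
      using base lam by (simp_all add: u_def powr_powr)
    then have "f (x * u) = M + K"
      using exact[OF u] K by (simp add: distrib_left)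
    then show False
      using bounded[of "x * u"] x u K by simp
  qed
qed

lemma class_B_majorant_strict_on_interval:
  fixes lam x M :: real
  assumes fB: "class_B lam f" and lam: "0 < lam" and x: "0 < x"
    and bounded: "\<And>t. 0 < t \<Longrightarrow> \<bar>f t\<bar> \<le> M" and nonconst: "\<not> (\<exists>c. \<forall>t>0. f t = c)"
  obtains a b where "0 < a" "a < b"
    "\<And>u. u \<in> {a..b} \<Longrightarrow> f (x * u) < f x + x * deriv f x / lam * (u powr lam - 1)"
proof -
  obtain u where "0 < u" and "f (x * u) < f x + x * deriv f x / lam * (u powr lam - 1)"
    using ex_class_B_majorant_strict[OF assms] by blast
  then have "f (x * u) - x * deriv f x / lam * u powr lam < f (x * 1) - x * deriv f x / lam * 1 powr lam"
    by (simp add: right_diff_distrib)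
  then obtain a b where ab: "0 < a" "a < b"
    and less: "\<And>s. s \<in> {a..b} \<Longrightarrow> f (x * s) - x * deriv f x / lam * s powr lam < f (x * 1) - x * deriv f x / lam * 1 powr lam"
    using unimodal_less_peak_interval[OF class_B_unimodal[OF fB lam x] \<open>0 < u\<close>] by blast
  show ?thesis
  proof (rule that[OF ab])
    fix s
    assume "s \<in> {a..b}"
    from less[OF this] show "f (x * s) < f x + x * deriv f x / lam * (s powr lam - 1)"
      by (simp add: right_diff_distrib)
  qed
qed

lemma integral_gamma_weight_class_B_less:
  fixes lam x y M :: real
  assumes fB: "class_B lam f" and lam: "0 < lam" and x: "0 < x" and y: "0 < y"
    and bounded: "\<And>t. 0 < t \<Longrightarrow> \<bar>f t\<bar> \<le> M" and nonconst: "\<not> (\<exists>c. \<forall>t>0. f t = c)"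
  defines "K \<equiv> x * deriv f x / lam"
  shows "integral\<^sup>L lborel (\<lambda>u. gamma_weight y u * f (x * u))
    < Gamma y / y powr y * (f x - K) + K * (Gamma (y + lam) / y powr (y + lam))"
proof -
  obtain a b where ab: "0 < a" "a < b"
    and strict: "\<And>u. u \<in> {a..b} \<Longrightarrow> f (x * u) < f x + K * (u powr lam - 1)"
    using class_B_majorant_strict_on_interval[OF fB lam x bounded nonconst] unfolding K_def by blast
  show ?thesis
  proof (rule has_bochner_integral_less)
    show "has_bochner_integral lborel (\<lambda>u. gamma_weight y u * f (x * u))
        (integral\<^sup>L lborel (\<lambda>u. gamma_weight y u * f (x * u)))"
      by (rule has_bochner_integral_integrable[OF integrable_gamma_weight_comp[OF
            class_B_continuous_on[OF fB] bounded x y]])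
    show "has_bochner_integral lborel (\<lambda>u. gamma_weight y u * (f x - K) + K * (gamma_weight y u * u powr lam))
        (Gamma y / y powr y * (f x - K) + K * (Gamma (y + lam) / y powr (y + lam)))"
      using y lam
      by (intro has_bochner_integral_add has_bochner_integral_mult_left has_bochner_integral_mult_right
          has_bochner_integral_gamma_weight has_bochner_integral_gamma_weight_powr) simp_all
    show "gamma_weight y u * f (x * u) \<le> gamma_weight y u * (f x - K) + K * (gamma_weight y u * u powr lam)" for u
    proof (cases "0 < u")
      case True
      then have "gamma_weight y u * f (x * u) \<le> gamma_weight y u * (f x + K * (u powr lam - 1))"
        using class_B_majorant[OF fB lam x True] by (intro mult_left_mono gamma_weight_nonneg) (simp add: K_def)
      then show ?thesis
        by (simp add: algebra_simps)
    qed (simp add: gamma_weight_nonpos)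
    show "gamma_weight y u * f (x * u) < gamma_weight y u * (f x - K) + K * (gamma_weight y u * u powr lam)"
      if "u \<in> {a..b}" for u
    proof -
      have "gamma_weight y u * f (x * u) < gamma_weight y u * (f x + K * (u powr lam - 1))"
        using strict[OF that] gamma_weight_pos[of u y] that ab by (intro mult_strict_left_mono) auto
      then show ?thesis
        by (simp add: algebra_simps)
    qed
    show "{a..b} \<in> sets lborel" "emeasure lborel {a..b} \<noteq> 0"
      using ab by simp_all
  qed
qed

lemma nn_integral_gamma_weight_class_B_less:
  fixes lam x y M :: real
  assumes fB: "class_B lam f" and lam: "0 < lam" and x: "0 < x" and y: "0 < y"
    and bounded: "\<And>t. 0 < t \<Longrightarrow> \<bar>f t\<bar> \<le> M" and nonconst: "\<not> (\<exists>c. \<forall>t>0. f t = c)"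
  shows "(\<integral>\<^sup>+u. ennreal (gamma_weight y u * f (x * u)) \<partial>lborel)
    < ennreal (max (Gamma y / y powr y) (Gamma (y + lam) / y powr (y + lam)) * f x)"
proof -
  define K where "K = x * deriv f x / lam"
  define G where "G = Gamma y / y powr y"
  define H where "H = Gamma (y + lam) / y powr (y + lam)"
  define J where "J = integral\<^sup>L lborel (\<lambda>u. gamma_weight y u * f (x * u))"
  have K: "0 \<le> K" "K \<le> f x"
    using class_B_deriv_nonneg[OF fB x] class_B_mult_deriv_le[OF fB lam x] x lam by (simp_all add: K_def)
  have "J < G * (f x - K) + K * H"
    unfolding J_def G_def H_def K_def by (rule integral_gamma_weight_class_B_less[OF assms])
  also have "\<dots> \<le> max G H * (f x - K) + K * max G H"
    using K by (intro add_mono mult_right_mono mult_left_mono) auto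
  finally have less: "J < max G H * f x"
    by (simp add: algebra_simps)
  have integrand_nonneg: "0 \<le> gamma_weight y u * f (x * u)" for u
    using class_B_nonneg[OF fB, of "x * u"] x gamma_weight_nonneg[of y u]
    by (cases "0 < u") (simp_all add: gamma_weight_nonpos)
  have "(\<integral>\<^sup>+u. ennreal (gamma_weight y u * f (x * u)) \<partial>lborel) = ennreal J"
    unfolding J_def using integrable_gamma_weight_comp[OF class_B_continuous_on[OF fB] bounded x y] integrand_nonneg
    by (intro nn_integral_eq_integral) auto
  moreover have "0 \<le> J"
    unfolding J_def using integrand_nonneg by (intro integral_nonneg_AE) auto
  ultimately show ?thesis
    using less by (simp add: G_def H_def ennreal_lessI)
qed

lemma nn_integral_inverse_powr_eq_gamma_weight:
  fixes \<omega> :: "real measure" and lam x y :: real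
  assumes sets: "sets \<omega> = sets borel" and nonneg: "AE s in \<omega>. 0 \<le> s"
    and sigma_finite: "sigma_finite_measure \<omega>"
    and laplace: "\<And>t. t > 0 \<Longrightarrow>
        ennreal (t powr (- lam) * f t) = (\<integral>\<^sup>+ s. ennreal (exp (- t * s)) \<partial>\<omega>)"
    and f_nonneg: "\<And>t. 0 < t \<Longrightarrow> 0 \<le> f t" and f_cont: "continuous_on {0<..} f"
    and lam: "0 < lam" and x: "0 < x" and y: "0 < y"
  shows "ennreal (Gamma (lam + y)) * (\<integral>\<^sup>+s. ennreal (1 / (y + x * s) powr (lam + y)) \<partial>\<omega>)
       = ennreal (x powr - lam) * (\<integral>\<^sup>+u. ennreal (gamma_weight y u * f (x * u)) \<partial>lborel)"
proof -
  have "ennreal (Gamma (lam + y)) * (\<integral>\<^sup>+s. ennreal (1 / (y + x * s) powr (lam + y)) \<partial>\<omega>)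
      = (\<integral>\<^sup>+u. ennreal (indicator {0<..} u * u powr (lam + y - 1) * exp (- (y * u)))
              * (\<integral>\<^sup>+s. ennreal (exp (- (x * u) * s)) \<partial>\<omega>) \<partial>lborel)"
    using lam y by (intro nn_integral_inverse_powr_eq_laplace[OF sets nonneg sigma_finite _ y x]) simp
  also have "\<dots> = (\<integral>\<^sup>+u. ennreal (x powr - lam) * ennreal (gamma_weight y u * f (x * u)) \<partial>lborel)"
  proof (rule nn_integral_cong)
    fix u :: real
    show "ennreal (indicator {0<..} u * u powr (lam + y - 1) * exp (- (y * u)))
              * (\<integral>\<^sup>+s. ennreal (exp (- (x * u) * s)) \<partial>\<omega>)
        = ennreal (x powr - lam) * ennreal (gamma_weight y u * f (x * u))"
    proof (cases "0 < u")
      case True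
      have "u powr (lam + y - 1) = u powr lam * u powr (y - 1)"
        by (simp add: add_diff_eq flip: powr_add)
      then have integrand: "u powr (lam + y - 1) * exp (- (y * u)) * ((x * u) powr - lam * f (x * u))
          = x powr - lam * (gamma_weight y u * f (x * u))"
        using x True by (simp add: gamma_weight_def powr_mult powr_minus field_simps)
      have laplace_xu: "(\<integral>\<^sup>+s. ennreal (exp (- (x * u) * s)) \<partial>\<omega>) = ennreal ((x * u) powr - lam * f (x * u))"
        using x True by (intro laplace[symmetric]) simp
      have "ennreal (indicator {0<..} u * u powr (lam + y - 1) * exp (- (y * u)))
              * (\<integral>\<^sup>+s. ennreal (exp (- (x * u) * s)) \<partial>\<omega>)
          = ennreal (u powr (lam + y - 1) * exp (- (y * u))) * ennreal ((x * u) powr - lam * f (x * u))"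
        unfolding laplace_xu using True by simp
      also have "\<dots> = ennreal (x powr - lam * (gamma_weight y u * f (x * u)))"
        by (simp flip: integrand ennreal_mult')
      also have "\<dots> = ennreal (x powr - lam) * ennreal (gamma_weight y u * f (x * u))"
        by (simp add: ennreal_mult')
      finally show ?thesis .
    qed (simp add: gamma_weight_nonpos)
  qed
  also have "\<dots> = ennreal (x powr - lam) * (\<integral>\<^sup>+u. ennreal (gamma_weight y u * f (x * u)) \<partial>lborel)"
    using borel_measurable_gamma_weight_comp[OF f_cont x] by (simp add: nn_integral_cmult)
  finally show ?thesis .
qed

lemma laplace_inverse_powr_less:
  fixes lam :: real and f :: "real \<Rightarrow> real" and \<omega> :: "real measure" and x y :: real
  assumes lam_pos: "lam > 0"
    and fB: "class_B lam f"
    and bdd: "\<exists>M. \<forall>x>0. \<bar>f x\<bar> \<le> M"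
    and nonconst: "\<not> (\<exists>c. \<forall>x>0. f x = c)"
    and sets_\<omega>: "sets \<omega> = sets borel"
    and supp_\<omega>: "emeasure \<omega> {..<0} = 0"
    and laplace: "\<And>t. t > 0 \<Longrightarrow>
        ennreal (t powr (- lam) * f t) = (\<integral>\<^sup>+ s. ennreal (exp (- t * s)) \<partial>\<omega>)"
    and x: "0 < x" and y: "0 < y"
  shows "ennreal (Gamma (lam + y) / max (Gamma y / y powr y) (Gamma (y + lam) / y powr (y + lam))) *
           (\<integral>\<^sup>+ s. ennreal (1 / (y + x * s) powr (lam + y)) \<partial>\<omega>)
         < (\<integral>\<^sup>+ s. ennreal (exp (- x * s)) \<partial>\<omega>)"
proof -
  obtain M where M: "\<And>t. 0 < t \<Longrightarrow> \<bar>f t\<bar> \<le> M"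
    using bdd by blast
  define m where "m = max (Gamma y / y powr y) (Gamma (y + lam) / y powr (y + lam))"
  have m: "0 < m"
    using Gamma_real_pos[OF y] y by (simp add: m_def less_max_iff_disj)
  have nonneg: "AE s in \<omega>. 0 \<le> s"
    by (rule AE_I[of _ _ "{..<0}"]) (auto simp: supp_\<omega> sets_\<omega>)
  have sigma_finite: "sigma_finite_measure \<omega>"
    by (rule sigma_finite_if_laplace_finite[OF sets_\<omega>, of 1]) (use laplace[of 1, symmetric] in simp)
  let ?I = "\<integral>\<^sup>+ s. ennreal (1 / (y + x * s) powr (lam + y)) \<partial>\<omega>"
  let ?J = "\<integral>\<^sup>+u. ennreal (gamma_weight y u * f (x * u)) \<partial>lborel"
  have "ennreal (Gamma (lam + y) / m) * ?I = ennreal (1 / m) * (ennreal (Gamma (lam + y)) * ?I)"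
    using m by (simp add: mult.assoc[symmetric] flip: ennreal_mult')
  also have "\<dots> = ennreal (x powr - lam / m) * ?J"
    using nn_integral_inverse_powr_eq_gamma_weight[OF sets_\<omega> nonneg sigma_finite laplace
        class_B_nonneg[OF fB] class_B_continuous_on[OF fB] lam_pos x y] m
    by (simp add: mult.assoc[symmetric] flip: ennreal_mult')
  also have "\<dots> < ennreal (x powr - lam / m) * ennreal (m * f x)"
  proof (rule ennreal_mult_strict_left_mono)
    show "?J < ennreal (m * f x)"
      unfolding m_def by (rule nn_integral_gamma_weight_class_B_less[OF fB lam_pos x y M nonconst])
  qed (use m x in simp_all)
  also have "\<dots> = ennreal (x powr - lam * f x)"
    using m by (simp flip: ennreal_mult')
  also have "\<dots> = (\<integral>\<^sup>+ s. ennreal (exp (- x * s)) \<partial>\<omega>)"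
    by (rule laplace[OF x])
  finally show ?thesis
    by (simp add: m_def)
qed

theorem corollary2p5:
  fixes lam :: real and f :: "real \<Rightarrow> real" and \<omega> :: "real measure"
  assumes lam_pos: "lam > 0"
    and fB: "class_B lam f"
    and bdd: "\<exists>M. \<forall>x>0. \<bar>f x\<bar> \<le> M"
    and nonconst: "\<not> (\<exists>c. \<forall>x>0. f x = c)"
    and sets_\<omega>: "sets \<omega> = sets borel"
    and supp_\<omega>: "emeasure \<omega> {..<0} = 0"
    and laplace: "\<And>t. t > 0 \<Longrightarrow>
        ennreal (t powr (- lam) * f t) = (\<integral>\<^sup>+ s. ennreal (exp (- t * s)) \<partial>\<omega>)"
  shows "(lam \<le> 1 \<longrightarrow> (\<forall>x>0. \<forall>y>0.
            ennreal (y powr y * Gamma (lam + y) / Gamma y) *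
              (\<integral>\<^sup>+ s. ennreal (1 / (y + x * s) powr (lam + y)) \<partial>\<omega>)
            < (\<integral>\<^sup>+ s. ennreal (exp (- x * s)) \<partial>\<omega>)))
       \<and> (lam > 1 \<longrightarrow> (\<forall>x>0. \<forall>y>0.
            ennreal (y powr (lam + y)) *
              (\<integral>\<^sup>+ s. ennreal (1 / (y + x * s) powr (lam + y)) \<partial>\<omega>)
            < (\<integral>\<^sup>+ s. ennreal (exp (- x * s)) \<partial>\<omega>)))"
proof (intro conjI impI allI)
  fix x y :: real
  assume "lam \<le> 1" and x: "0 < x" and y: "0 < y"
  have "Gamma (y + lam) / y powr (y + lam) \<le> Gamma y / y powr y"
    using Gamma_add_le_powr_Gamma[OF y] lam_pos \<open>lam \<le> 1\<close> y
    by (simp add: powr_add divide_simps mult.commute)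
  then show "ennreal (y powr y * Gamma (lam + y) / Gamma y) *
      (\<integral>\<^sup>+ s. ennreal (1 / (y + x * s) powr (lam + y)) \<partial>\<omega>) < (\<integral>\<^sup>+ s. ennreal (exp (- x * s)) \<partial>\<omega>)"
    using laplace_inverse_powr_less[OF assms x y] by (simp add: max_def ac_simps)
next
  fix x y :: real
  assume "1 < lam" and x: "0 < x" and y: "0 < y"
  have "Gamma y / y powr y \<le> Gamma (y + lam) / y powr (y + lam)"
    using powr_Gamma_le_Gamma_add[OF y] \<open>1 < lam\<close> y
    by (simp add: powr_add divide_simps mult.commute)
  moreover have "0 < Gamma (lam + y)"
    using lam_pos y by (intro Gamma_real_pos) simp
  ultimately show "ennreal (y powr (lam + y)) *
      (\<integral>\<^sup>+ s. ennreal (1 / (y + x * s) powr (lam + y)) \<partial>\<omega>) < (\<integral>\<^sup>+ s. ennreal (exp (- x * s)) \<partial>\<omega>)"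
    using laplace_inverse_powr_less[OF assms x y] by (simp add: max_def add.commute)
qed

end
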